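(* Let $\kappa$ be an infinite cardinal. Then $2^\kappa\nrightarrow(\omega)_\kappa^{\mathrm{AFP}}$. In fact: if $G$ is any abelian group (written additively) with $|G|=2^\kappa$, then there is a colouring $c:G\to\kappa$ such that for all nonzero $x,y\in G$, $c(x)=c(y)$ implies $c(x)\neq c(x+y)$.
   Context: For a group $G$, an ordinal $\mu$ and a $\mu$-sequence $(g_\alpha\mid\alpha<\mu)$ of elements of $G$, its set of adjacent finite products is $\mathrm{AFP}(g_\alpha\mid\alpha<\mu)=\{g_\alpha g_{\alpha+1}\cdots g_{\alpha+n}\mid \alpha<\mu,\ n<\omega\}$ (all indices lying below $\mu$). For a group $G$, an ordinal $\mu$ and a cardinal $\kappa$, $G\rightarrow(\mu)_\kappa^{\mathrm{AFP}}$ means: for every colouring $c:G\to\kappa$ there is an injective $\mu$-sequence $(g_\alpha\mid\alpha<\mu)$ of elements of $G$ such that $\mathrm{AFP}(g_\alpha\mid\alpha<\mu)$ is monochromatic for $c$. For a cardinal $\lambda$, $\lambda\rightarrow(\mu)_\kappa^{\mathrm{AFP}}$ means that $G\rightarrow(\mu)_\kappa^{\mathrm{AFP}}$ holds for every group $G$ with $|G|=\lambda$; $\lambda\nrightarrow(\mu)_\kappa^{\mathrm{AFP}}$ is its negation. *)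

theory Defs
  imports "HOL-Algebra.Group" "HOL-Library.Equipollence" "HOL-Library.FuncSet"
begin

fun afp_prod :: "('a, 'b) monoid_scheme \<Rightarrow> (nat \<Rightarrow> 'a) \<Rightarrow> nat \<Rightarrow> nat \<Rightarrow> 'a" where
  "afp_prod G g a 0 = g a"
| "afp_prod G g a (Suc n) = afp_prod G g a n \<otimes>\<^bsub>G\<^esub> g (a + Suc n)"

definition AFP :: "('a, 'b) monoid_scheme \<Rightarrow> (nat \<Rightarrow> 'a) \<Rightarrow> 'a set" where
  "AFP G g = {afp_prod G g a n | a n. True}"

text \<open>G \<rightarrow> (omega)^AFP_kappa, where the cardinal kappa is represented by a set K of that size.\<close>
definition AFP_arrow_omega :: "('a, 'b) monoid_scheme \<Rightarrow> 'k set \<Rightarrow> bool" where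
  "AFP_arrow_omega G K \<longleftrightarrow>
     (\<forall>c \<in> carrier G \<rightarrow> K. \<exists>g :: nat \<Rightarrow> 'a.
        inj g \<and> range g \<subseteq> carrier G \<and> (\<exists>col. \<forall>x \<in> AFP G g. c x = col))"

end

theory Submission
  imports Defs "HOL-Algebra.Free_Abelian_Groups" "HOL-Algebra.Multiplicative_Group"
    "HOL-Library.Function_Algebras" "HOL-Library.Product_Plus"
begin

(* Every abelian group G embeds into the finitely supported functions G \<rightarrow> Q/Z \<times> Q: by Zorn,
   adjoining one element at a time and using that Q/Z \<times> Q is divisible and contains a copy of
   every cyclic group.  Fix an injection e of G into Pow K.  Colour a nonzero finitely supported v
   by (F, e s \<inter> F, v s), where F is a finite subset of K on which the sets e t, t \<in> supp v,
   have pairwise distinct traces and s is some point of supp v; there are only |K| such colours.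
   If u, v and u + v all had colour (F, T, a), then summing each of them over the indices
   t \<in> supp u \<union> supp v whose trace e t \<inter> F is T would pick out exactly its value at its own
   pivot, giving a + a = a, contradicting a \<noteq> 0.  Finally, a colouring without monochromatic
   x, y, x y rules out an injective sequence with monochromatic AFP, which would contain
   g a, g (a + 1) and g a g (a + 1). *)

quotient_type coef = "rat \<times> rat" / "\<lambda>p q. fst p - fst q \<in> \<int> \<and> snd p = snd q"
proof (rule equivpI)
  show "reflp (\<lambda>p q. fst p - fst q \<in> \<int> \<and> snd p = snd q)"
    by (rule reflpI) simp
  show "symp (\<lambda>p q. fst p - fst q \<in> \<int> \<and> snd p = snd q)"
    by (rule sympI) (metis minus_diff_eq minus_in_Ints_iff)
  show "transp (\<lambda>p q. fst p - fst q \<in> \<int> \<and> snd p = snd q)"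
    by (rule transpI) (auto dest: Ints_add)
qed

instantiation coef :: ab_group_add
begin

lift_definition zero_coef :: coef is 0 .

lift_definition plus_coef :: "coef \<Rightarrow> coef \<Rightarrow> coef" is "(+)"
proof (elim conjE, intro conjI)
  fix p p' q q' :: "rat \<times> rat"
  assume "fst p - fst p' \<in> \<int>" "fst q - fst q' \<in> \<int>"
  then have "(fst p - fst p') + (fst q - fst q') \<in> \<int>" by (rule Ints_add)
  then show "fst (p + q) - fst (p' + q') \<in> \<int>" by (simp add: algebra_simps)
qed simp

lift_definition uminus_coef :: "coef \<Rightarrow> coef" is uminus
  by (simp, metis minus_diff_eq minus_in_Ints_iff)

lift_definition minus_coef :: "coef \<Rightarrow> coef \<Rightarrow> coef" is "(-)"
proof (elim conjE, intro conjI)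
  fix p p' q q' :: "rat \<times> rat"
  assume "fst p - fst p' \<in> \<int>" "fst q - fst q' \<in> \<int>"
  then have "(fst p - fst p') - (fst q - fst q') \<in> \<int>" by (rule Ints_diff)
  then show "fst (p - q) - fst (p' - q') \<in> \<int>" by (simp add: algebra_simps)
qed simp

instance
  by standard (transfer; simp add: algebra_simps)+

end

lift_definition Coef :: "rat \<Rightarrow> rat \<Rightarrow> coef" is Pair .

lift_definition zscale :: "int \<Rightarrow> coef \<Rightarrow> coef" is "\<lambda>k p. (of_int k * fst p, of_int k * snd p)"
proof (elim conjE, intro conjI)
  fix k :: int and p q :: "rat \<times> rat"
  assume "fst p - fst q \<in> \<int>"
  then have "of_int k * (fst p - fst q) \<in> \<int>" by (simp add: Ints_mult)
  then show "fst (of_int k * fst p, of_int k * snd p) - fst (of_int k * fst q, of_int k * snd q) \<in> \<int>"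
    by (simp add: algebra_simps)
qed simp

interpretation coef: Modules.module zscale
  by standard (transfer; simp add: algebra_simps)+

lemma coef_cases: obtains x y where "c = Coef x y"
  by transfer auto

lemma Coef_eq_0_iff: "Coef x y = 0 \<longleftrightarrow> x \<in> \<int> \<and> y = 0"
  by transfer simp

lemma zscale_Coef: "zscale k (Coef x y) = Coef (of_int k * x) (of_int k * y)"
  by transfer simp

lemma countable_coef: "countable (UNIV :: coef set)"
proof -
  have "c \<in> range (case_prod Coef)" for c
  proof -
    obtain x y where "c = Coef x y" by (rule coef_cases)
    then show ?thesis by (simp add: image_iff) blast
  qed
  then have "UNIV = range (case_prod Coef)" by blast
  then show ?thesis by (metis countable_image countableI_type)
qed

(* Of order n, and of infinite order for n = 0 (as 1 / 0 = 0). *)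
definition cyclic_coef :: "nat \<Rightarrow> coef" where
  "cyclic_coef n = Coef (1 / of_nat n) (if n = 0 then 1 else 0)"

lemma zscale_cyclic_coef_eq_0_iff: "zscale k (cyclic_coef n) = 0 \<longleftrightarrow> int n dvd k"
proof (cases "n = 0")
  case True
  then show ?thesis by (simp add: cyclic_coef_def zscale_Coef Coef_eq_0_iff)
next
  case False
  have "of_int k / of_nat n \<in> (\<int> :: rat set) \<longleftrightarrow> int n dvd k"
  proof
    assume "of_int k / of_nat n \<in> (\<int> :: rat set)"
    then obtain j where "of_int k / of_nat n = (of_int j :: rat)" by (elim Ints_cases)
    then have "(of_int k :: rat) = of_int j * of_int (int n)"
      using False by (simp add: divide_eq_eq)
    then have "k = j * int n"
      by (simp only: of_int_mult[symmetric] of_int_eq_iff)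
    then show "int n dvd k" by simp
  next
    assume "int n dvd k"
    then obtain j where "k = int n * j" by (elim dvdE)
    then show "of_int k / of_nat n \<in> (\<int> :: rat set)" using False by simp
  qed
  then show ?thesis using False by (simp add: cyclic_coef_def zscale_Coef Coef_eq_0_iff)
qed

lemma zscale_surj:
  assumes "k \<noteq> 0"
  shows "\<exists>d. zscale k d = c"
proof -
  obtain x y where "c = Coef x y" by (rule coef_cases)
  then have "zscale k (Coef (x / of_int k) (y / of_int k)) = c"
    using assms by (simp add: zscale_Coef)
  then show ?thesis ..
qed

definition fscale :: "int \<Rightarrow> ('a \<Rightarrow> coef) \<Rightarrow> 'a \<Rightarrow> coef" where
  "fscale k v = (\<lambda>t. zscale k (v t))"

interpretation coef_fun: Modules.module fscale
  by standard (simp_all add: fscale_def fun_eq_iff coef.scale_right_distrib coef.scale_left_distrib)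

definition supp :: "('a \<Rightarrow> 'b::zero) \<Rightarrow> 'a set" where
  "supp v = {t. v t \<noteq> 0}"

lemma supp_add: "supp (u + v) \<subseteq> supp u \<union> supp (v :: 'a \<Rightarrow> 'b::monoid_add)"
  by (auto simp: supp_def)

lemma supp_fscale: "supp (fscale k v) \<subseteq> supp v"
  by (auto simp: supp_def fscale_def)

lemma fscale_divisible:
  assumes "n \<noteq> 0 \<or> a = 0"
  obtains p where "fscale n p = a" "supp p \<subseteq> supp a"
proof
  define p where "p t = (if a t = 0 then 0 else SOME d. zscale n d = a t)" for t
  show "fscale n p = a"
  proof
    fix t
    show "fscale n p t = a t"
    proof (cases "a t = 0")
      case False
      with assms have "\<exists>d. zscale n d = a t" by (auto intro: zscale_surj)
      with False show ?thesis by (simp add: fscale_def p_def) (rule someI_ex)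
    qed (simp add: fscale_def p_def)
  qed
  show "supp p \<subseteq> supp a"
    by (auto simp: supp_def p_def)
qed

lemma (in group) subgroup_Union_chain:
  assumes "\<S> \<noteq> {}" and chain: "subset.chain {H. subgroup H G} \<S>"
  shows "subgroup (\<Union>\<S>) G"
proof -
  have sg: "subgroup H G" if "H \<in> \<S>" for H
    using chain that by (auto simp: subset_chain_def)
  show ?thesis
  proof (rule subgroupI)
    show "\<Union>\<S> \<subseteq> carrier G"
    proof
      fix x assume "x \<in> \<Union>\<S>"
      then obtain H where "H \<in> \<S>" "x \<in> H" by blast
      then show "x \<in> carrier G" by (rule subgroup.mem_carrier[OF sg])
    qed
    obtain H where "H \<in> \<S>" using \<open>\<S> \<noteq> {}\<close> by blast
    then show "\<Union>\<S> \<noteq> {}"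
      using subgroup.one_closed[OF sg] by blast
  next
    fix x assume "x \<in> \<Union>\<S>"
    then obtain H where "H \<in> \<S>" "x \<in> H" by blast
    then show "inv x \<in> \<Union>\<S>"
      using subgroup.m_inv_closed[OF sg] by blast
  next
    fix x y assume "x \<in> \<Union>\<S>" "y \<in> \<Union>\<S>"
    then have "finite {x, y}" "{x, y} \<subseteq> \<Union>\<S>" by auto
    then obtain H where "H \<in> \<S>" "{x, y} \<subseteq> H"
      by (rule finite_subset_Union_chain[OF _ _ \<open>\<S> \<noteq> {}\<close> chain])
    then show "x \<otimes> y \<in> \<Union>\<S>"
      using subgroup.m_closed[OF sg] by blast
  qed
qed

context comm_group
begin

lemma int_pow_mem_subgroup_iff_dvd:
  assumes H: "subgroup H G" and g: "g \<in> carrier G"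
  obtains n :: nat where "\<And>k::int. g [^] k \<in> H \<longleftrightarrow> int n dvd k"
proof
  interpret N: normal H G by (rule subgroup_imp_normal[OF H])
  interpret Q: group "G Mod H" by (rule N.factorgroup_is_group)
  have x: "H #> g \<in> carrier (G Mod H)"
    using g by (simp add: carrier_FactGroup)
  fix k :: int
  have gk: "g [^] k \<in> carrier G" using g by simp
  have "g [^] k \<in> H \<longleftrightarrow> H #> g [^] k = H"
    using rcos_self[OF gk H] subgroup.rcos_const[OF H] by auto
  also have "\<dots> \<longleftrightarrow> (H #> g) [^]\<^bsub>G Mod H\<^esub> k = \<one>\<^bsub>G Mod H\<^esub>"
    using g by (simp add: N.FactGroup_int_pow)
  also have "\<dots> \<longleftrightarrow> int (Q.ord (H #> g)) dvd k"
    by (rule Q.int_pow_eq_id[OF x])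
  finally show "g [^] k \<in> H \<longleftrightarrow> int (Q.ord (H #> g)) dvd k" .
qed

lemma mem_set_mult_generate_iff:
  assumes "g \<in> carrier G"
  shows "x \<in> H <#> generate G {g} \<longleftrightarrow> (\<exists>h\<in>H. \<exists>k::int. x = h \<otimes> g [^] k)"
  using assms by (auto simp: set_mult_def generate_pow)

(* The graph of an injective homomorphism from the subgroup Domain M into the finitely supported
   functions Domain M \<rightarrow> coef; graphs are ordered by extension under \<subseteq>, as Zorn's lemma needs. *)
definition partial_embedding :: "('a \<times> ('a \<Rightarrow> coef)) set \<Rightarrow> bool" where
  "partial_embedding M \<longleftrightarrow> subgroup (Domain M) G \<and> single_valued M
     \<and> (\<forall>x u y v. (x, u) \<in> M \<longrightarrow> (y, v) \<in> M \<longrightarrow> (x \<otimes> y, u + v) \<in> M)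
     \<and> (\<forall>x. (x, 0) \<in> M \<longrightarrow> x = \<one>)
     \<and> (\<forall>x u. (x, u) \<in> M \<longrightarrow> finite (supp u) \<and> supp u \<subseteq> Domain M)"

lemma partial_embeddingD:
  assumes "partial_embedding M"
  shows "subgroup (Domain M) G" and "single_valued M"
    and "(x, u) \<in> M \<Longrightarrow> (y, v) \<in> M \<Longrightarrow> (x \<otimes> y, u + v) \<in> M"
    and "(x, 0) \<in> M \<Longrightarrow> x = \<one>"
    and "(x, u) \<in> M \<Longrightarrow> finite (supp u)"
    and "(x, u) \<in> M \<Longrightarrow> supp u \<subseteq> Domain M"
  using assms unfolding partial_embedding_def by blast+

lemma partial_embedding_one:
  assumes M: "partial_embedding M"
  shows "(\<one>, 0) \<in> M"
proof -
  have "\<one> \<in> Domain M"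
    using partial_embeddingD(1)[OF M] by (rule subgroup.one_closed)
  then obtain w where w: "(\<one>, w) \<in> M" by blast
  then have "(\<one>, w + w) \<in> M"
    using partial_embeddingD(3)[OF M w w] by simp
  with w have "w + w = w"
    using partial_embeddingD(2)[OF M] by (auto dest: single_valuedD)
  with w show ?thesis by simp
qed

lemma partial_embedding_inv:
  assumes M: "partial_embedding M" and xu: "(x, u) \<in> M"
  shows "(inv x, - u) \<in> M"
proof -
  have x: "x \<in> Domain M" using xu by blast
  have xG: "x \<in> carrier G"
    using subgroup.mem_carrier[OF partial_embeddingD(1)[OF M] x] .
  have "inv x \<in> Domain M"
    using subgroup.m_inv_closed[OF partial_embeddingD(1)[OF M] x] .
  then obtain w where w: "(inv x, w) \<in> M" by blast
  have "(\<one>, u + w) \<in> M"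
    using partial_embeddingD(3)[OF M xu w] xG by simp
  then have "u + w = 0"
    using partial_embedding_one[OF M] partial_embeddingD(2)[OF M] by (auto dest: single_valuedD)
  then have "w = - u" by (simp add: eq_neg_iff_add_eq_0 add.commute)
  with w show ?thesis by simp
qed

lemma partial_embedding_int_pow:
  assumes M: "partial_embedding M" and xu: "(x, u) \<in> M"
  shows "(x [^] k, fscale k u) \<in> M"
proof -
  have xG: "x \<in> carrier G"
    using xu partial_embeddingD(1)[OF M] by (auto dest: subgroup.mem_carrier)
  have nat_pow: "(x [^] n, fscale (int n) u) \<in> M" for n :: nat
  proof (induction n)
    case 0
    show ?case
      using partial_embedding_one[OF M] by (simp only: of_nat_0 nat_pow_0 coef_fun.scale_zero_left)
  next
    case (Suc n)
    have "fscale (int (Suc n)) u = fscale (int n) u + u"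
      unfolding of_nat_Suc coef_fun.scale_left_distrib coef_fun.scale_one by (rule add.commute)
    then show ?case
      unfolding nat_pow_Suc by (metis partial_embeddingD(3)[OF M Suc xu])
  qed
  show ?thesis
  proof (cases k rule: int_cases2)
    case (nonneg n)
    then show ?thesis using nat_pow[of n] by (simp add: int_pow_int)
  next
    case (nonpos n)
    then show ?thesis
      using partial_embedding_inv[OF M nat_pow[of n]] xG by (simp add: int_pow_neg_int)
  qed
qed

end

(* As every u with (h, u) \<in> M vanishes at the fresh coordinate g, the choice
   p g = cyclic_coef n makes h \<otimes> g [^] k \<mapsto> u + fscale k p injective. *)
locale embedding_extension = comm_group G for G (structure) +
  fixes M :: "('a \<times> ('a \<Rightarrow> coef)) set" and g :: 'a and n :: nat and p :: "'a \<Rightarrow> coef"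
  assumes partial: "partial_embedding M"
    and g: "g \<in> carrier G" "g \<notin> Domain M"
    and order: "\<And>k. g [^] k \<in> Domain M \<longleftrightarrow> int n dvd k"
    and root: "(g [^] int n, fscale (int n) p) \<in> M"
    and p_at_g: "p g = cyclic_coef n"
    and supp_p: "finite (supp p)" "supp p \<subseteq> insert g (Domain M)"
begin

definition extension :: "('a \<times> ('a \<Rightarrow> coef)) set" where
  "extension = (\<lambda>((x, u), k). (x \<otimes> g [^] k, u + fscale k p)) ` (M \<times> (UNIV :: int set))"

lemma extensionI: "(x, u) \<in> M \<Longrightarrow> (x \<otimes> g [^] k, u + fscale k p) \<in> extension"
  unfolding extension_def by force

lemma extensionE:
  assumes "(y, w) \<in> extension"
  obtains x u k where "(x, u) \<in> M" "y = x \<otimes> g [^] k" "w = u + fscale k p"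
  using assms unfolding extension_def by auto

lemma M_carrier: "(x, u) \<in> M \<Longrightarrow> x \<in> carrier G"
  using partial_embeddingD(1)[OF partial] by (auto dest: subgroup.mem_carrier)

lemma multiple_mem:
  assumes "int n dvd k"
  shows "(g [^] k, fscale k p) \<in> M"
proof -
  obtain t where k: "k = int n * t" using assms by (elim dvdE)
  have "((g [^] int n) [^] t, fscale t (fscale (int n) p)) \<in> M"
    by (rule partial_embedding_int_pow[OF partial root])
  then show ?thesis
    using g(1) by (simp add: int_pow_pow k mult.commute)
qed

lemma Domain_extension: "Domain extension = Domain M <#> generate G {g}"
proof (rule Set.set_eqI)
  fix y
  show "y \<in> Domain extension \<longleftrightarrow> y \<in> Domain M <#> generate G {g}"
    unfolding mem_set_mult_generate_iff[OF g(1)] by (fastforce elim!: extensionE intro: extensionI)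
qed

lemma M_subset_extension: "M \<subseteq> extension"
proof
  fix y assume "y \<in> M"
  then obtain x u where xu: "y = (x, u)" "(x, u) \<in> M" by (cases y) blast
  have "(x \<otimes> g [^] (0::int), u + fscale 0 p) \<in> extension" by (rule extensionI[OF xu(2)])
  then show "y \<in> extension" using xu M_carrier by simp
qed

lemma g_mem_Domain_extension: "g \<in> Domain extension"
proof -
  have "(\<one> \<otimes> g [^] (1::int), 0 + fscale 1 p) \<in> extension"
    by (rule extensionI[OF partial_embedding_one[OF partial]])
  then show ?thesis using g(1) by force
qed

lemma single_valued_extension: "single_valued extension"
proof (rule single_valuedI)
  fix y w1 w2 assume "(y, w1) \<in> extension" "(y, w2) \<in> extension"
  then obtain x1 u1 k1 x2 u2 k2 where
      xu1: "(x1, u1) \<in> M" "y = x1 \<otimes> g [^] k1" "w1 = u1 + fscale k1 p"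
    and xu2: "(x2, u2) \<in> M" "y = x2 \<otimes> g [^] k2" "w2 = u2 + fscale k2 p"
    by (elim extensionE)
  have x1: "x1 \<in> carrier G" and x2: "x2 \<in> carrier G"
    using M_carrier xu1(1) xu2(1) by auto
  have "x2 = (x2 \<otimes> g [^] k2) \<otimes> inv (g [^] k2)"
    using x2 g(1) by (simp add: m_assoc)
  also have "\<dots> = (x1 \<otimes> g [^] k1) \<otimes> inv (g [^] k2)"
    using xu1(2) xu2(2) by simp
  also have "\<dots> = x1 \<otimes> g [^] (k1 - k2)"
    using x1 g(1) by (simp add: int_pow_diff m_assoc)
  finally have x2_eq: "x2 = x1 \<otimes> g [^] (k1 - k2)" .
  have "g [^] (k1 - k2) = inv x1 \<otimes> x2"
    using x2_eq x1 g(1) by (simp add: m_assoc[symmetric])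
  moreover have "inv x1 \<otimes> x2 \<in> Domain M"
    using xu1(1) xu2(1) partial_embeddingD(1)[OF partial]
    by (blast intro: subgroup.m_closed subgroup.m_inv_closed)
  ultimately have "g [^] (k1 - k2) \<in> Domain M" by simp
  then have "int n dvd (k1 - k2)" using order by blast
  then have "(x1 \<otimes> g [^] (k1 - k2), u1 + fscale (k1 - k2) p) \<in> M"
    by (intro partial_embeddingD(3)[OF partial xu1(1)] multiple_mem)
  then have "u2 = u1 + fscale (k1 - k2) p"
    using xu2(1) x2_eq partial_embeddingD(2)[OF partial] by (auto dest: single_valuedD)
  then show "w1 = w2"
    using xu1(3) xu2(3) by (simp add: coef_fun.scale_left_diff_distrib)
qed

lemma extension_zero:
  assumes "(y, 0) \<in> extension"
  shows "y = \<one>"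
proof -
  obtain x u k where xu: "(x, u) \<in> M" "y = x \<otimes> g [^] k" "0 = u + fscale k p"
    using assms by (elim extensionE)
  have "u g = 0"
    using partial_embeddingD(6)[OF partial xu(1)] g(2) by (auto simp: supp_def)
  then have "zscale k (cyclic_coef n) = 0"
    using fun_cong[OF xu(3), of g] p_at_g by (simp add: fscale_def)
  then have "(g [^] k, fscale k p) \<in> M"
    by (intro multiple_mem) (simp add: zscale_cyclic_coef_eq_0_iff)
  then have "(y, 0) \<in> M"
    using partial_embeddingD(3)[OF partial xu(1)] xu(2,3) by metis
  then show ?thesis by (rule partial_embeddingD(4)[OF partial])
qed

lemma partial_embedding_extension: "partial_embedding extension"
  unfolding partial_embedding_def
proof (intro conjI allI impI)
  show "subgroup (Domain extension) G"
    unfolding Domain_extension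
    using partial_embeddingD(1)[OF partial] g(1)
    by (intro mult_subgroups generate_is_subgroup) auto
  show "single_valued extension" by (rule single_valued_extension)
next
  fix y w y' w' assume "(y, w) \<in> extension" "(y', w') \<in> extension"
  then obtain x u k x' u' k' where
      xu: "(x, u) \<in> M" "y = x \<otimes> g [^] k" "w = u + fscale k p"
    and xu': "(x', u') \<in> M" "y' = x' \<otimes> g [^] k'" "w' = u' + fscale k' p"
    by (elim extensionE)
  have "((x \<otimes> x') \<otimes> g [^] (k + k'), (u + u') + fscale (k + k') p) \<in> extension"
    by (intro extensionI partial_embeddingD(3)[OF partial xu(1) xu'(1)])
  moreover have "(x \<otimes> x') \<otimes> g [^] (k + k') = y \<otimes> y'"
    using xu xu' M_carrier g(1) by (simp add: int_pow_mult m_ac)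
  moreover have "(u + u') + fscale (k + k') p = w + w'"
    using xu xu' by (simp add: coef_fun.scale_left_distrib ac_simps)
  ultimately show "(y \<otimes> y', w + w') \<in> extension" by simp
next
  fix y assume "(y, 0) \<in> extension"
  then show "y = \<one>" by (rule extension_zero)
next
  fix y w assume "(y, w) \<in> extension"
  then obtain x u k where xu: "(x, u) \<in> M" "w = u + fscale k p"
    by (elim extensionE)
  have "supp w \<subseteq> supp u \<union> supp (fscale k p)"
    unfolding xu(2) by (rule supp_add)
  then have sub: "supp w \<subseteq> supp u \<union> supp p"
    using supp_fscale[of k p] by blast
  show "finite (supp w)"
    using sub partial_embeddingD(5)[OF partial xu(1)] supp_p(1) by (meson finite_UnI finite_subset)
  show "supp w \<subseteq> Domain extension"
    using sub partial_embeddingD(6)[OF partial xu(1)] supp_p(2) Domain_mono[OF M_subset_extension]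
      g_mem_Domain_extension by blast
qed

end

context comm_group
begin

lemma partial_embedding_extend:
  assumes M: "partial_embedding M" and g: "g \<in> carrier G" "g \<notin> Domain M"
  obtains M' where "partial_embedding M'" "M \<subset> M'"
proof -
  obtain n where order: "\<And>k. g [^] k \<in> Domain M \<longleftrightarrow> int n dvd k"
    using int_pow_mem_subgroup_iff_dvd[OF partial_embeddingD(1)[OF M] g(1)] by blast
  then have "g [^] int n \<in> Domain M" by simp
  then obtain a where root: "(g [^] int n, a) \<in> M" by blast
  have "int n \<noteq> 0 \<or> a = 0"
    using root partial_embedding_one[OF M] partial_embeddingD(2)[OF M]
    by (auto dest: single_valuedD)
  then obtain p0 where p0: "fscale (int n) p0 = a" "supp p0 \<subseteq> supp a"
    by (rule fscale_divisible)
  have a_g: "a g = 0"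
    using partial_embeddingD(6)[OF M root] g(2) by (auto simp: supp_def)
  define p where "p = p0(g := cyclic_coef n)"
  have "fscale (int n) p = a"
  proof
    fix t show "fscale (int n) p t = a t"
      using fun_cong[OF p0(1), of t] a_g zscale_cyclic_coef_eq_0_iff[of "int n" n]
      by (cases "t = g") (simp_all add: p_def fscale_def)
  qed
  moreover have "supp p \<subseteq> insert g (supp a)"
    using p0(2) by (auto simp: p_def supp_def)
  moreover note partial_embeddingD(5,6)[OF M root]
  ultimately interpret E: embedding_extension G M g n p
    using M g order root by unfold_locales (auto simp: p_def intro: finite_subset)
  show thesis
  proof
    show "partial_embedding E.extension" by (rule E.partial_embedding_extension)
    show "M \<subset> E.extension"
    proof (rule psubsetI)
      show "M \<subseteq> E.extension" by (rule E.M_subset_extension)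
      show "M \<noteq> E.extension" using E.g_mem_Domain_extension g(2) by auto
    qed
  qed
qed

lemma partial_embedding_trivial: "partial_embedding {(\<one>, 0)}"
proof -
  have "Domain {(\<one>, 0)} = {\<one>}" by auto
  then show ?thesis
    unfolding partial_embedding_def using triv_subgroup by (auto simp: supp_def single_valued_def)
qed

lemma partial_embedding_Union_chain:
  assumes "\<C> \<noteq> {}" and chain: "subset.chain {M. partial_embedding M} \<C>"
  shows "partial_embedding (\<Union>\<C>)"
proof -
  have pe: "partial_embedding M" if "M \<in> \<C>" for M
    using chain that unfolding subset_chain_def by blast
  have two: "\<exists>M\<in>\<C>. a \<in> M \<and> b \<in> M" if "a \<in> \<Union>\<C>" "b \<in> \<Union>\<C>" for a b
  proof -
    have "finite {a, b}" "{a, b} \<subseteq> \<Union>\<C>" using that by auto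
    then obtain M where "M \<in> \<C>" "{a, b} \<subseteq> M"
      by (rule finite_subset_Union_chain[OF _ _ \<open>\<C> \<noteq> {}\<close> chain])
    then show ?thesis by blast
  qed
  show ?thesis
    unfolding partial_embedding_def
  proof (intro conjI allI impI)
    have "subset.chain {H. subgroup H G} (Domain ` \<C>)"
      unfolding subset_chain_def
    proof (intro conjI ballI)
      show "Domain ` \<C> \<subseteq> {H. subgroup H G}"
        using partial_embeddingD(1)[OF pe] by blast
      fix H1 H2 assume "H1 \<in> Domain ` \<C>" "H2 \<in> Domain ` \<C>"
      then obtain M1 M2 where M: "M1 \<in> \<C>" "M2 \<in> \<C>" "H1 = Domain M1" "H2 = Domain M2"
        by blast
      then have "M1 \<subseteq> M2 \<or> M2 \<subseteq> M1"
        using chain unfolding subset_chain_def by blast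
      then show "H1 \<subseteq> H2 \<or> H2 \<subseteq> H1"
        using M(3,4) Domain_mono by blast
    qed
    then show "subgroup (Domain (\<Union>\<C>)) G"
      unfolding Domain_Union using \<open>\<C> \<noteq> {}\<close> by (intro subgroup_Union_chain) auto
    show "single_valued (\<Union>\<C>)"
    proof (rule single_valuedI)
      fix x u v assume "(x, u) \<in> \<Union>\<C>" "(x, v) \<in> \<Union>\<C>"
      then obtain M where "M \<in> \<C>" "(x, u) \<in> M" "(x, v) \<in> M" using two by blast
      then show "u = v" using partial_embeddingD(2)[OF pe] by (auto dest: single_valuedD)
    qed
  next
    fix x u y v assume "(x, u) \<in> \<Union>\<C>" "(y, v) \<in> \<Union>\<C>"
    then obtain M where "M \<in> \<C>" "(x, u) \<in> M" "(y, v) \<in> M" using two by blast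
    then show "(x \<otimes> y, u + v) \<in> \<Union>\<C>" using partial_embeddingD(3)[OF pe] by blast
  next
    fix x assume "(x, 0) \<in> \<Union>\<C>"
    then show "x = \<one>" using partial_embeddingD(4)[OF pe] by blast
  next
    fix x u assume "(x, u) \<in> \<Union>\<C>"
    then obtain M where M: "M \<in> \<C>" "(x, u) \<in> M" by blast
    then show "finite (supp u)" using partial_embeddingD(5)[OF pe] by blast
    have "supp u \<subseteq> Domain M" using M partial_embeddingD(6)[OF pe] by blast
    then show "supp u \<subseteq> Domain (\<Union>\<C>)" using M by blast
  qed
qed

lemma embedding_into_finite_support:
  obtains f :: "'a \<Rightarrow> 'a \<Rightarrow> coef" where
    "\<And>x y. x \<in> carrier G \<Longrightarrow> y \<in> carrier G \<Longrightarrow> f (x \<otimes> y) = f x + f y"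
    "\<And>x. x \<in> carrier G \<Longrightarrow> f x = 0 \<Longrightarrow> x = \<one>"
    "\<And>x. x \<in> carrier G \<Longrightarrow> finite (supp (f x))"
    "\<And>x. x \<in> carrier G \<Longrightarrow> supp (f x) \<subseteq> carrier G"
proof -
  have "\<exists>M\<in>{M. partial_embedding M}. \<forall>M'\<in>{M. partial_embedding M}. M \<subseteq> M' \<longrightarrow> M' = M"
    by (rule subset_Zorn_nonempty) (use partial_embedding_trivial partial_embedding_Union_chain in auto)
  then obtain M where M: "partial_embedding M"
    and maximal: "\<And>M'. partial_embedding M' \<Longrightarrow> M \<subseteq> M' \<Longrightarrow> M' = M"
    by blast
  have Domain_M: "Domain M = carrier G"
  proof (rule ccontr)
    assume "Domain M \<noteq> carrier G"
    then have "Domain M \<subset> carrier G"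
      using subgroup.subset[OF partial_embeddingD(1)[OF M]] by (simp add: psubset_eq)
    then obtain g where "g \<in> carrier G" "g \<notin> Domain M"
      by (meson psubset_imp_ex_mem DiffE)
    then obtain M' where "partial_embedding M'" "M \<subset> M'"
      by (rule partial_embedding_extend[OF M])
    then show False using maximal[of M'] by (simp add: psubset_eq)
  qed
  define f where "f x = (THE u. (x, u) \<in> M)" for x
  have f: "(x, f x) \<in> M" if "x \<in> carrier G" for x
  proof -
    have "x \<in> Domain M" using that Domain_M by simp
    then obtain u where u: "(x, u) \<in> M" by (rule DomainE)
    then have "f x = u"
      unfolding f_def using partial_embeddingD(2)[OF M]
      by (intro the_equality) (auto dest: single_valuedD)
    with u show ?thesis by simp
  qed
  show thesis
  proof
    fix x y assume x: "x \<in> carrier G" and y: "y \<in> carrier G"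
    have "(x \<otimes> y, f x + f y) \<in> M"
      by (rule partial_embeddingD(3)[OF M f[OF x] f[OF y]])
    then show "f (x \<otimes> y) = f x + f y"
      using f[of "x \<otimes> y"] x y partial_embeddingD(2)[OF M] by (auto dest: single_valuedD)
  next
    fix x assume "x \<in> carrier G"
    then show "f x = 0 \<Longrightarrow> x = \<one>" "finite (supp (f x))" "supp (f x) \<subseteq> carrier G"
      using f[of x] partial_embeddingD(4,5,6)[OF M] Domain_M by auto
  qed
qed

end

definition separating_set :: "('i \<Rightarrow> 'k set) \<Rightarrow> 'i set \<Rightarrow> 'k set" where
  "separating_set e S = (SOME F. finite F \<and> F \<subseteq> \<Union>(e ` S) \<and> inj_on (\<lambda>t. e t \<inter> F) S)"

lemma separating_set:
  assumes S: "finite S" and e: "inj_on e S"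
  shows "finite (separating_set e S)" "separating_set e S \<subseteq> \<Union>(e ` S)"
    "inj_on (\<lambda>t. e t \<inter> separating_set e S) S"
proof -
  define P where "P = {(s, t). s \<in> S \<and> t \<in> S \<and> s \<noteq> t}"
  define \<sigma> where "\<sigma> = (\<lambda>(s, t). SOME k. k \<in> sym_diff (e s) (e t))"
  have \<sigma>: "\<sigma> (s, t) \<in> sym_diff (e s) (e t)" if "(s, t) \<in> P" for s t
  proof -
    have "e s \<noteq> e t" using that e by (auto simp: P_def dest: inj_onD)
    then have "\<exists>k. k \<in> sym_diff (e s) (e t)" by blast
    then show ?thesis unfolding \<sigma>_def case_prod_conv by (rule someI_ex)
  qed
  have "finite (\<sigma> ` P)"
    using S by (intro finite_imageI finite_subset[of P "S \<times> S"]) (auto simp: P_def)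
  moreover have "\<sigma> ` P \<subseteq> \<Union>(e ` S)"
    using \<sigma> by (fastforce simp: P_def)
  moreover have "inj_on (\<lambda>t. e t \<inter> \<sigma> ` P) S"
  proof (rule inj_onI, rule ccontr)
    fix s t assume st: "s \<in> S" "t \<in> S" "e s \<inter> \<sigma> ` P = e t \<inter> \<sigma> ` P" "s \<noteq> t"
    then have "(s, t) \<in> P" by (simp add: P_def)
    with st(3) \<sigma>[of s t] show False by blast
  qed
  ultimately have "\<exists>F. finite F \<and> F \<subseteq> \<Union>(e ` S) \<and> inj_on (\<lambda>t. e t \<inter> F) S" by blast
  then have "finite (separating_set e S) \<and> separating_set e S \<subseteq> \<Union>(e ` S)
      \<and> inj_on (\<lambda>t. e t \<inter> separating_set e S) S"
    unfolding separating_set_def by (rule someI_ex)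
  then show "finite (separating_set e S)" "separating_set e S \<subseteq> \<Union>(e ` S)"
    "inj_on (\<lambda>t. e t \<inter> separating_set e S) S" by auto
qed

definition pivot :: "('i \<Rightarrow> 'b::zero) \<Rightarrow> 'i" where
  "pivot v = (SOME t. v t \<noteq> 0)"

lemma pivot: "v \<noteq> 0 \<Longrightarrow> v (pivot v) \<noteq> 0"
  unfolding pivot_def by (rule someI_ex) (auto simp: fun_eq_iff)

(* For v = 0 the pivot is arbitrary, but the last component 0 still sets v apart from every
   nonzero function. *)
definition colour_data :: "('i \<Rightarrow> 'k set) \<Rightarrow> ('i \<Rightarrow> 'b::zero) \<Rightarrow> 'k set \<times> 'k set \<times> 'b" where
  "colour_data e v =
     (let F = separating_set e (supp v) in (F, e (pivot v) \<inter> F, v (pivot v)))"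

lemma sum_trace_class_eq:
  fixes v :: "'i \<Rightarrow> 'b::comm_monoid_add"
  assumes inj: "inj_on (\<lambda>t. e t \<inter> F) (supp v)" and U: "finite U" "s \<in> U"
    and s: "s \<in> supp v" and same: "\<And>t. t \<in> U \<Longrightarrow> e t \<inter> F = e s \<inter> F"
  shows "sum v U = v s"
proof -
  have "v t = 0" if t: "t \<in> U - {s}" for t
  proof (rule ccontr)
    assume "v t \<noteq> 0"
    then have "t \<in> supp v" by (simp add: supp_def)
    with s same[of t] t have "t = s" by (auto dest: inj_onD[OF inj])
    with t show False by simp
  qed
  then have "sum v (U - {s}) = 0" by (intro sum.neutral ballI)
  then show ?thesis using sum.remove[OF U, of v] by simp
qed

lemma colour_data_add_neq:
  fixes u v :: "'i \<Rightarrow> 'b::ab_group_add"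
  assumes fin: "finite (supp u)" "finite (supp v)" and e: "inj_on e (supp u \<union> supp v)"
    and "u \<noteq> 0" and uv: "colour_data e u = colour_data e v"
  shows "colour_data e (u + v) \<noteq> colour_data e u"
proof
  assume uv_u: "colour_data e (u + v) = colour_data e u"
  define F where "F = separating_set e (supp u)"
  define T where "T = e (pivot u) \<inter> F"
  define a where "a = u (pivot u)"
  have "a \<noteq> 0" unfolding a_def using \<open>u \<noteq> 0\<close> by (rule pivot)
  define U where "U = (supp u \<union> supp v) \<inter> {t. e t \<inter> F = T}"
  have "finite U" using fin by (simp add: U_def)
  have sum_U: "sum w U = a"
    if w: "colour_data e w = (F, T, a)" "supp w \<subseteq> supp u \<union> supp v" for w :: "'i \<Rightarrow> 'b"
  proof -
    have data: "separating_set e (supp w) = F" "e (pivot w) \<inter> F = T" "w (pivot w) = a"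
      using w(1) by (auto simp: colour_data_def Let_def)
    have pivot_w: "pivot w \<in> supp w" using data(3) \<open>a \<noteq> 0\<close> by (simp add: supp_def)
    have "finite (supp w)" using finite_subset[OF w(2)] fin by simp
    moreover have "inj_on e (supp w)" using inj_on_subset[OF e w(2)] .
    ultimately have inj: "inj_on (\<lambda>t. e t \<inter> F) (supp w)"
      using separating_set(3) data(1) by metis
    have "sum w U = w (pivot w)"
    proof (rule sum_trace_class_eq[OF inj \<open>finite U\<close> _ pivot_w])
      show "pivot w \<in> U" using pivot_w w(2) data(2) by (auto simp: U_def)
      show "e t \<inter> F = e (pivot w) \<inter> F" if "t \<in> U" for t
        using that data(2) by (simp add: U_def)
    qed
    then show ?thesis using data(3) by simp
  qed
  have u: "colour_data e u = (F, T, a)" by (simp add: colour_data_def Let_def F_def T_def a_def)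
  have "a = sum (u + v) U"
    using sum_U[of "u + v"] u uv_u supp_add[of u v] by simp
  also have "\<dots> = sum u U + sum v U" by (simp add: sum.distrib)
  also have "\<dots> = a + a"
    using sum_U[of u] sum_U[of v] u uv by simp
  finally show False using \<open>a \<noteq> 0\<close> by simp
qed

lemma Fpow_times_lepoll:
  assumes K: "infinite K" and B: "B \<lesssim> K"
  shows "Fpow K \<times> Fpow K \<times> B \<lesssim> K"
proof -
  have FK: "Fpow K \<lesssim> K" using eqpoll_Fpow[OF K] by (rule eqpoll_imp_lepoll)
  have KK: "K \<times> K \<lesssim> K"
    using card_of_Times_same_infinite[OF K] eqpoll_iff_card_of_ordIso eqpoll_imp_lepoll by blast
  have "Fpow K \<times> Fpow K \<times> B \<lesssim> K \<times> K \<times> K"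
    using FK B by (intro times_lepoll_mono)
  also have "\<dots> \<lesssim> K \<times> K" using KK by (intro times_lepoll_mono lepoll_refl)
  also have "\<dots> \<lesssim> K" by (rule KK)
  finally show ?thesis .
qed

lemma finite_support_colouring:
  fixes e :: "'i \<Rightarrow> 'k set" and K :: "'k set"
  assumes K: "infinite K" and e: "inj_on e I" "e ` I \<subseteq> Pow K"
    and B: "(UNIV :: 'b set) \<lesssim> K"
  obtains c :: "('i \<Rightarrow> 'b::ab_group_add) \<Rightarrow> 'k" where
    "\<And>v. finite (supp v) \<Longrightarrow> supp v \<subseteq> I \<Longrightarrow> c v \<in> K"
    "\<And>u v. finite (supp u) \<Longrightarrow> supp u \<subseteq> I \<Longrightarrow> finite (supp v) \<Longrightarrow> supp v \<subseteq> I \<Longrightarrow>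
      u \<noteq> 0 \<Longrightarrow> c u = c v \<Longrightarrow> c u \<noteq> c (u + v)"
proof -
  let ?D = "Fpow K \<times> Fpow K \<times> (UNIV :: 'b set)"
  obtain \<iota> where \<iota>: "inj_on \<iota> ?D" "\<iota> ` ?D \<subseteq> K"
    using Fpow_times_lepoll[OF K B] unfolding lepoll_def by blast
  have data: "colour_data e v \<in> ?D" if "finite (supp v)" "supp v \<subseteq> I" for v :: "'i \<Rightarrow> 'b"
  proof -
    have "inj_on e (supp v)" using e(1) that(2) by (rule inj_on_subset)
    then have "finite (separating_set e (supp v))" "separating_set e (supp v) \<subseteq> K"
      using separating_set(1,2)[OF that(1)] e(2) that(2) by blast+
    then show ?thesis by (auto simp: colour_data_def Let_def Fpow_def)
  qed
  show thesis
  proof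
    fix v :: "'i \<Rightarrow> 'b" assume "finite (supp v)" "supp v \<subseteq> I"
    then show "(\<iota> \<circ> colour_data e) v \<in> K" using data \<iota>(2) by auto
  next
    fix u v :: "'i \<Rightarrow> 'b"
    assume u: "finite (supp u)" "supp u \<subseteq> I" and v: "finite (supp v)" "supp v \<subseteq> I"
      and "u \<noteq> 0" and c: "(\<iota> \<circ> colour_data e) u = (\<iota> \<circ> colour_data e) v"
    have "supp (u + v) \<subseteq> supp u \<union> supp v" by (rule supp_add)
    then have uv: "finite (supp (u + v))" "supp (u + v) \<subseteq> I"
      using u v by (auto intro: finite_subset[OF _ finite_UnI])
    have "colour_data e u = colour_data e v"
      using c inj_onD[OF \<iota>(1)] data u v by simp
    moreover have "inj_on e (supp u \<union> supp v)"
      using u(2) v(2) by (intro inj_on_subset[OF e(1)]) simp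
    ultimately have "colour_data e (u + v) \<noteq> colour_data e u"
      using u(1) v(1) \<open>u \<noteq> 0\<close> by (intro colour_data_add_neq)
    then show "(\<iota> \<circ> colour_data e) u \<noteq> (\<iota> \<circ> colour_data e) (u + v)"
      using inj_on_eq_iff[OF \<iota>(1) data[OF u] data[OF uv]] by auto
  qed
qed

lemma (in comm_group) colouring_without_monochromatic_products:
  fixes K :: "'k set"
  assumes K: "infinite K" and GK: "carrier G \<lesssim> Pow K"
  shows "\<exists>c \<in> carrier G \<rightarrow> K. \<forall>x \<in> carrier G. \<forall>y \<in> carrier G.
           x \<noteq> \<one> \<and> y \<noteq> \<one> \<and> c x = c y \<longrightarrow> c x \<noteq> c (x \<otimes> y)"
proof -
  obtain f :: "'a \<Rightarrow> 'a \<Rightarrow> coef" where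
      hom: "\<And>x y. x \<in> carrier G \<Longrightarrow> y \<in> carrier G \<Longrightarrow> f (x \<otimes> y) = f x + f y"
    and inj: "\<And>x. x \<in> carrier G \<Longrightarrow> f x = 0 \<Longrightarrow> x = \<one>"
    and fin: "\<And>x. x \<in> carrier G \<Longrightarrow> finite (supp (f x))"
    and supp: "\<And>x. x \<in> carrier G \<Longrightarrow> supp (f x) \<subseteq> carrier G"
    using embedding_into_finite_support by blast
  obtain e where e: "inj_on e (carrier G)" "e ` carrier G \<subseteq> Pow K"
    using GK unfolding lepoll_def by blast
  have "(UNIV :: coef set) \<lesssim> (UNIV :: nat set)"
    using countable_coef unfolding countable_def lepoll_def by blast
  also have "(UNIV :: nat set) \<lesssim> K"
    using K by (simp add: infinite_le_lepoll)
  finally have coef_K: "(UNIV :: coef set) \<lesssim> K" .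
  obtain c :: "('a \<Rightarrow> coef) \<Rightarrow> 'k" where
      c_K: "\<And>v. finite (supp v) \<Longrightarrow> supp v \<subseteq> carrier G \<Longrightarrow> c v \<in> K"
    and c_sum: "\<And>u v. finite (supp u) \<Longrightarrow> supp u \<subseteq> carrier G \<Longrightarrow> finite (supp v) \<Longrightarrow>
        supp v \<subseteq> carrier G \<Longrightarrow> u \<noteq> 0 \<Longrightarrow> c u = c v \<Longrightarrow> c u \<noteq> c (u + v)"
    using finite_support_colouring[OF K e coef_K] by blast
  show ?thesis
  proof (intro bexI ballI impI)
    show "c \<circ> f \<in> carrier G \<rightarrow> K" using c_K[OF fin supp] by auto
    fix x y assume x: "x \<in> carrier G" and y: "y \<in> carrier G"
      and xy: "x \<noteq> \<one> \<and> y \<noteq> \<one> \<and> (c \<circ> f) x = (c \<circ> f) y"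
    have "f x \<noteq> 0" using inj[OF x] xy by blast
    then have "c (f x) \<noteq> c (f x + f y)"
      using c_sum[OF fin[OF x] supp[OF x] fin[OF y] supp[OF y]] xy by simp
    then show "(c \<circ> f) x \<noteq> (c \<circ> f) (x \<otimes> y)" using hom[OF x y] by simp
  qed
qed

lemma not_AFP_arrow_omegaI:
  fixes H :: "('a, 'm) monoid_scheme" and K :: "'k set"
  assumes c: "c \<in> carrier H \<rightarrow> K"
    and no_mono: "\<forall>x \<in> carrier H. \<forall>y \<in> carrier H.
              x \<noteq> \<one>\<^bsub>H\<^esub> \<and> y \<noteq> \<one>\<^bsub>H\<^esub> \<and> c x = c y \<longrightarrow> c x \<noteq> c (x \<otimes>\<^bsub>H\<^esub> y)"
  shows "\<not> AFP_arrow_omega H K"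
proof
  assume "AFP_arrow_omega H K"
  then have "\<exists>g :: nat \<Rightarrow> 'a. inj g \<and> range g \<subseteq> carrier H \<and> (\<exists>col. \<forall>x \<in> AFP H g. c x = col)"
    unfolding AFP_arrow_omega_def using c by (rule bspec)
  then obtain g :: "nat \<Rightarrow> 'a" and col where g: "inj g" "range g \<subseteq> carrier H"
    and col: "\<And>x. x \<in> AFP H g \<Longrightarrow> c x = col"
    by blast
  obtain a where a: "g a \<noteq> \<one>\<^bsub>H\<^esub>" "g (Suc a) \<noteq> \<one>\<^bsub>H\<^esub>"
  proof (cases "g 0 \<noteq> \<one>\<^bsub>H\<^esub> \<and> g 1 \<noteq> \<one>\<^bsub>H\<^esub>")
    case True
    then show thesis by (intro that[of 0]) simp_all
  next
    case False
    have one: "i = j" if "g i = \<one>\<^bsub>H\<^esub>" "g j = \<one>\<^bsub>H\<^esub>" for i j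
      using that by (intro injD[OF g(1)]) simp
    have "g 2 \<noteq> \<one>\<^bsub>H\<^esub>" "g 3 \<noteq> \<one>\<^bsub>H\<^esub>"
      using False one[of 2 0] one[of 2 1] one[of 3 0] one[of 3 1] by auto
    then show thesis by (intro that[of 2]) (simp_all add: numeral_3_eq_3)
  qed
  have AFP: "afp_prod H g b m \<in> AFP H g" for b m
    unfolding AFP_def by blast
  have "c (g a) = col" "c (g (Suc a)) = col" "c (g a \<otimes>\<^bsub>H\<^esub> g (Suc a)) = col"
    using col[OF AFP[of a 0]] col[OF AFP[of "Suc a" 0]] col[OF AFP[of a 1]] by simp_all
  moreover have "g a \<in> carrier H" "g (Suc a) \<in> carrier H" using g(2) by auto
  ultimately show False using no_mono[rule_format, of "g a" "g (Suc a)"] a by simp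
qed

definition symdiff_group :: "'k set \<Rightarrow> 'k set monoid" where
  "symdiff_group K = \<lparr>carrier = Pow K, mult = sym_diff, one = {}\<rparr>"

lemma comm_group_symdiff_group: "comm_group (symdiff_group K)"
  by (rule comm_groupI) (auto simp: symdiff_group_def)

theorem mainTheorem3:
  fixes K :: "'k set" and G :: "'a monoid"
  assumes "infinite K"
  shows "(\<exists>H :: 'k set monoid. group H \<and> carrier H \<approx> Pow K \<and> \<not> AFP_arrow_omega H K)
       \<and> (comm_group G \<and> carrier G \<approx> Pow K \<longrightarrow>
           (\<exists>c \<in> carrier G \<rightarrow> K. \<forall>x \<in> carrier G. \<forall>y \<in> carrier G.
              x \<noteq> \<one>\<^bsub>G\<^esub> \<and> y \<noteq> \<one>\<^bsub>G\<^esub> \<and> c x = c y \<longrightarrow> c x \<noteq> c (x \<otimes>\<^bsub>G\<^esub> y)))"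
proof (intro conjI impI)
  let ?H = "symdiff_group K"
  interpret H: comm_group ?H by (rule comm_group_symdiff_group)
  have size: "carrier ?H \<approx> Pow K" by (simp add: symdiff_group_def)
  obtain c where "c \<in> carrier ?H \<rightarrow> K" and "\<forall>x \<in> carrier ?H. \<forall>y \<in> carrier ?H.
      x \<noteq> \<one>\<^bsub>?H\<^esub> \<and> y \<noteq> \<one>\<^bsub>?H\<^esub> \<and> c x = c y \<longrightarrow> c x \<noteq> c (x \<otimes>\<^bsub>?H\<^esub> y)"
    using H.colouring_without_monochromatic_products[OF assms eqpoll_imp_lepoll[OF size]] ..
  then have "\<not> AFP_arrow_omega ?H K" by (rule not_AFP_arrow_omegaI)
  with size H.is_group show "\<exists>H :: 'k set monoid. group H \<and> carrier H \<approx> Pow K \<and> \<not> AFP_arrow_omega H K"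
    by blast
next
  assume "comm_group G \<and> carrier G \<approx> Pow K"
  then show "\<exists>c \<in> carrier G \<rightarrow> K. \<forall>x \<in> carrier G. \<forall>y \<in> carrier G.
              x \<noteq> \<one>\<^bsub>G\<^esub> \<and> y \<noteq> \<one>\<^bsub>G\<^esub> \<and> c x = c y \<longrightarrow> c x \<noteq> c (x \<otimes>\<^bsub>G\<^esub> y)"
    by (intro comm_group.colouring_without_monochromatic_products[OF _ assms] eqpoll_imp_lepoll) auto
qed

end
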